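(* Let $\omega=(\omega_0,\omega_1,\dots)\in\{0,1\}^{\mathbb{N}}$ have the following property: for every $l>0$ there exists $L>0$ such that for every $k\ge0$ the block $(\omega_k,\dots,\omega_{k+L-1})$ contains $l$ successive zeros. Then $\omega$ is not central, i.e. the set $\{i:\omega_i=1\}$ is not a central set.
   Context: $S\subset\mathbb{N}$ is central if there are a compact metric space $(Z,d)$ with continuous $R:Z\to Z$, a uniformly recurrent point $z_0$ (for every open $U\ni z_0$, $\{n:R^nz_0\in U\}$ has bounded gaps), a point $z$ proximal to $z_0$ ($d(R^{n_k}z,R^{n_k}z_0)\to0$ along some increasing sequence $n_k$), and a neighborhood $U$ of $z_0$ with $S=\{n:R^nz\in U\}$. *)

theory Defs
  imports "HOL-Analysis.Analysis"
begin

definition bounded_gaps :: "nat set \<Rightarrow> bool" where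
  "bounded_gaps A \<longleftrightarrow> (\<exists>g>0. \<forall>m. \<exists>n\<in>A. m \<le> n \<and> n < m + g)"

definition uniformly_recurrent :: "('a::metric_space \<Rightarrow> 'a) \<Rightarrow> 'a \<Rightarrow> bool" where
  "uniformly_recurrent R z0 \<longleftrightarrow>
     (\<forall>U. open U \<and> z0 \<in> U \<longrightarrow> bounded_gaps {n. (R ^^ n) z0 \<in> U})"

definition proximal :: "('a::metric_space \<Rightarrow> 'a) \<Rightarrow> 'a \<Rightarrow> 'a \<Rightarrow> bool" where
  "proximal R z z0 \<longleftrightarrow>
     (\<exists>nk::nat \<Rightarrow> nat. strict_mono nk \<and>
        (\<lambda>k. dist ((R ^^ nk k) z) ((R ^^ nk k) z0)) \<longlonglongrightarrow> 0)"

text \<open>Central set, realised with a compact metric space Z carried by a subset of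
  a metric-space type 'a (the type is a parameter; the main theorem is stated
  for an arbitrary such type).\<close>
definition central :: "'a::metric_space itself \<Rightarrow> nat set \<Rightarrow> bool" where
  "central _ S \<longleftrightarrow>
     (\<exists>(Z::'a set) R z0 z U.
        compact Z \<and> continuous_on Z R \<and> R ` Z \<subseteq> Z \<and>
        z0 \<in> Z \<and> z \<in> Z \<and>
        uniformly_recurrent R z0 \<and> proximal R z z0 \<and>
        U \<subseteq> Z \<and> (\<exists>V. open V \<and> z0 \<in> V \<and> V \<inter> Z \<subseteq> U) \<and>
        S = {n. (R ^^ n) z \<in> U})"

end

theory Submission
  imports Defs
begin

text \<open>Central sets are piecewise syndetic: there is a gap bound g such that arbitrarily
  long intervals exist on which the set meets every window of length g. Indeed, choose
  g from the uniform recurrence of z0 to a small ball, and use proximality together with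
  the uniform continuity of the first L iterates of R to find a time m after which the
  orbit of z shadows that of z0 for L steps; then z returns to U whenever z0 returns to
  the ball. A sequence containing arbitrarily long blocks of zeros with bounded gaps
  between them has no such intervals for its set of ones.\<close>

definition piecewise_syndetic :: "nat set \<Rightarrow> bool" where
  "piecewise_syndetic A \<longleftrightarrow>
     (\<exists>g>0. \<forall>L. \<exists>m. \<forall>j. m \<le> j \<longrightarrow> j + g \<le> m + L \<longrightarrow> (\<exists>n\<in>A. j \<le> n \<and> n < j + g))"

lemma funpow_image_subset:
  assumes "f ` Z \<subseteq> Z"
  shows "(f ^^ n) ` Z \<subseteq> Z"
  by (induction n) (use assms in auto)

lemma continuous_on_funpow:
  assumes "continuous_on Z f" "f ` Z \<subseteq> Z"
  shows "continuous_on Z (f ^^ n)"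
proof (induction n)
  case 0
  then show ?case by simp
next
  case (Suc n)
  have "continuous_on Z (f \<circ> (f ^^ n))"
    using Suc funpow_image_subset[OF assms(2)] continuous_on_subset[OF assms(1)]
    by (intro continuous_on_compose) auto
  then show ?case by simp
qed

lemma uniformly_equicontinuous_funpow:
  assumes "compact Z" "continuous_on Z f" "f ` Z \<subseteq> Z" "e > 0"
  shows "\<exists>d>0. \<forall>x\<in>Z. \<forall>y\<in>Z. dist x y < d \<longrightarrow> (\<forall>i<L. dist ((f ^^ i) x) ((f ^^ i) y) < e)"
proof (induction L)
  case 0
  show ?case by (intro exI[of _ 1]) auto
next
  case (Suc L)
  then obtain d where "d > 0"
    and d: "\<forall>x\<in>Z. \<forall>y\<in>Z. dist x y < d \<longrightarrow> (\<forall>i<L. dist ((f ^^ i) x) ((f ^^ i) y) < e)"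
    by blast
  have "uniformly_continuous_on Z (f ^^ L)"
    using assms(1-3) by (intro compact_uniformly_continuous continuous_on_funpow)
  then obtain d' where "d' > 0"
    and d': "\<forall>x\<in>Z. \<forall>y\<in>Z. dist y x < d' \<longrightarrow> dist ((f ^^ L) y) ((f ^^ L) x) < e"
    using assms(4) unfolding uniformly_continuous_on_def by blast
  have "dist ((f ^^ i) x) ((f ^^ i) y) < e"
    if "x \<in> Z" "y \<in> Z" "dist x y < min d d'" "i < Suc L" for x y i
  proof (cases "i = L")
    case True
    with d' that show ?thesis by (simp add: dist_commute)
  next
    case False
    with d that show ?thesis by simp
  qed
  with \<open>d > 0\<close> \<open>d' > 0\<close> show ?case by (intro exI[of _ "min d d'"]) auto
qed

lemma proximal_shadowing:
  assumes "compact Z" "continuous_on Z f" "f ` Z \<subseteq> Z" "z \<in> Z" "z0 \<in> Z"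
    and "proximal f z z0" "e > 0"
  shows "\<exists>m. \<forall>i<L. dist ((f ^^ (i + m)) z) ((f ^^ (i + m)) z0) < e"
proof -
  obtain d where "d > 0"
    and d: "\<forall>x\<in>Z. \<forall>y\<in>Z. dist x y < d \<longrightarrow> (\<forall>i<L. dist ((f ^^ i) x) ((f ^^ i) y) < e)"
    using uniformly_equicontinuous_funpow[OF assms(1-3,7)] by blast
  obtain nk where "(\<lambda>k. dist ((f ^^ nk k) z) ((f ^^ nk k) z0)) \<longlonglongrightarrow> 0"
    using assms(6) unfolding proximal_def by blast
  then have "\<forall>\<^sub>F k in sequentially. dist ((f ^^ nk k) z) ((f ^^ nk k) z0) < d"
    using \<open>d > 0\<close> by (rule order_tendstoD)
  then obtain k where close: "dist ((f ^^ nk k) z) ((f ^^ nk k) z0) < d"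
    using eventually_sequentially by auto
  have "(f ^^ nk k) z \<in> Z" "(f ^^ nk k) z0 \<in> Z"
    using funpow_image_subset[OF assms(3)] assms(4,5) by blast+
  with d close have "\<forall>i<L. dist ((f ^^ i) ((f ^^ nk k) z)) ((f ^^ i) ((f ^^ nk k) z0)) < e"
    by blast
  then show ?thesis
    by (intro exI[of _ "nk k"]) (simp add: funpow_add)
qed

lemma central_imp_piecewise_syndetic:
  assumes "central TYPE('a::metric_space) S"
  shows "piecewise_syndetic S"
proof -
  obtain Z :: "'a set" and R z0 z U V where
    Z: "compact Z" "continuous_on Z R" "R ` Z \<subseteq> Z" "z0 \<in> Z" "z \<in> Z"
    and rec: "uniformly_recurrent R z0" and prox: "proximal R z z0"
    and V: "open V" "z0 \<in> V" "V \<inter> Z \<subseteq> U"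
    and S: "S = {n. (R ^^ n) z \<in> U}"
    using assms unfolding central_def by blast
  obtain e where "e > 0" and e: "ball z0 e \<subseteq> V"
    using V(1,2) openE by blast
  have "bounded_gaps {n. (R ^^ n) z0 \<in> ball z0 (e/2)}"
    using rec \<open>e > 0\<close> unfolding uniformly_recurrent_def by (simp del: mem_ball)
  then obtain g where "g > 0" and g: "\<forall>j. \<exists>n. dist z0 ((R ^^ n) z0) < e/2 \<and> j \<le> n \<and> n < j + g"
    unfolding bounded_gaps_def by auto
  have "\<exists>m. \<forall>j. m \<le> j \<longrightarrow> j + g \<le> m + L \<longrightarrow> (\<exists>n\<in>S. j \<le> n \<and> n < j + g)" for L
  proof -
    obtain m where m: "\<forall>i<L. dist ((R ^^ (i + m)) z) ((R ^^ (i + m)) z0) < e/2"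
      using proximal_shadowing[OF Z(1-3,5,4) prox, of "e/2" L] \<open>e > 0\<close> by auto
    have "\<exists>n\<in>S. j \<le> n \<and> n < j + g" if "m \<le> j" "j + g \<le> m + L" for j
    proof -
      obtain n where n: "dist z0 ((R ^^ n) z0) < e/2" "j \<le> n" "n < j + g"
        using g by blast
      have "dist ((R ^^ n) z) ((R ^^ n) z0) < e/2"
        using m[rule_format, of "n - m"] n that by simp
      with n(1) have "(R ^^ n) z \<in> ball z0 e"
        using dist_triangle[of z0 "(R ^^ n) z" "(R ^^ n) z0"] by (simp add: dist_commute)
      moreover have "(R ^^ n) z \<in> Z"
        using funpow_image_subset[OF Z(3)] Z(5) by blast
      ultimately show ?thesis
        using e V(3) n(2,3) S by blast
    qed
    then show ?thesis by blast
  qed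
  with \<open>g > 0\<close> show ?thesis
    unfolding piecewise_syndetic_def by blast
qed

theorem mainTheorem18:
  fixes \<omega> :: "nat \<Rightarrow> nat"
  assumes binary: "\<forall>i. \<omega> i \<in> {0, 1}"
    and zeros: "\<forall>l>0. \<exists>L>0. \<forall>k. \<exists>j. k \<le> j \<and> j + l \<le> k + L \<and> (\<forall>i\<in>{j..<j+l}. \<omega> i = 0)"
  shows "\<not> central TYPE('a::metric_space) {i. \<omega> i = 1}"
proof
  assume "central TYPE('a) {i. \<omega> i = 1}"
  then have "piecewise_syndetic {i. \<omega> i = 1}"
    by (rule central_imp_piecewise_syndetic)
  then obtain g where "g > 0"
    and g: "\<forall>L. \<exists>m. \<forall>j. m \<le> j \<longrightarrow> j + g \<le> m + L \<longrightarrow> (\<exists>n. \<omega> n = 1 \<and> j \<le> n \<and> n < j + g)"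
    unfolding piecewise_syndetic_def by auto
  obtain L where L: "\<forall>k. \<exists>j. k \<le> j \<and> j + g \<le> k + L \<and> (\<forall>i\<in>{j..<j+g}. \<omega> i = 0)"
    using zeros \<open>g > 0\<close> by blast
  obtain m where m: "\<forall>j. m \<le> j \<longrightarrow> j + g \<le> m + L \<longrightarrow> (\<exists>n. \<omega> n = 1 \<and> j \<le> n \<and> n < j + g)"
    using g by blast
  obtain j where "m \<le> j" "j + g \<le> m + L" and block: "\<forall>i\<in>{j..<j+g}. \<omega> i = 0"
    using L by blast
  then obtain n where "\<omega> n = 1" "j \<le> n" "n < j + g"
    using m by blast
  with block show False by auto
qed

end
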